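(* Assume (A1)–(A3) and $m_1<0$. Then for every $k\in\mathbb N$, the random variable $\sup_{0\le s\le T_1(k)}|Y_1(s)|$ is $\mathbb P_{(k,0)}$-integrable, where $T_1(k)=\inf\{n>0: X_1(n)=k\}$.
   Context: Let $\mathbb N=\{0,1,2,\dots\}$ and fix an integer $k_0\ge1$. Let $\mu$, $\mu'_j$ ($0\le j<k_0$), $\mu''_i$ ($0\le i<k_0$), $\mu_{ij}$ ($0\le i,j<k_0$) be probability measures on $\mathbb Z^2$. The random walk $Z=(X(n),Y(n))$ on $\mathbb N^2$ has transition probabilities $p((i,j)\to(i',j'))$ equal to $\mu(i'-i,j'-j)$ if $i,j\ge k_0$; $\mu'_j(i'-i,j'-j)$ if $i\ge k_0$, $0\le j<k_0$; $\mu''_i(i'-i,j'-j)$ if $0\le i<k_0$, $j\ge k_0$; $\mu_{ij}(i'-i,j'-j)$ if $0\le i,j<k_0$. Assumptions: (A1) $\mu(a,b)=0$ if $a<-k_0$ or $b<-k_0$; $\mu'_j(a,b)=0$ if $a<-k_0$ or $b<-j$; $\mu''_i(a,b)=0$ if $b<-k_0$ or $a<-i$; $\mu_{ij}(a,b)=0$ if $a<-i$ or $b<-j$. (A2) There are $\delta,\gamma,C>0$ with $\sup_{(i,j)\in\mathbb N^2}\mathbb E_{(i,j)}[\exp(\delta(X(1)-i)+\gamma(Y(1)-j))]\le C$. (A3) $Z_0,Z_1,Z_2,Z$ are irreducible on their state spaces. $Z_0$: random walk on $\mathbb Z^2$ with increment law $\mu$; $m_1=\sum a\mu(a,b)$.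 $Z_1=(X_1,Y_1)$: Markov chain on $\mathbb N\times\mathbb Z$ with transitions $\mu(i'-i,j'-j)$ from $(i,j)$ if $i\ge k_0$ and $\mu''_i(i'-i,j'-j)$ if $0\le i<k_0$; $\mathbb P_{(k,0)}$ is its law from $(k,0)$. $Z_2$: Markov chain on $\mathbb Z\times\mathbb N$ with transitions $\mu$ if $j\ge k_0$ and $\mu'_j$ if $0\le j<k_0$. *)

theory Defs
  imports "HOL-Probability.Probability"
begin

definition natsq :: "(int \<times> int) set" where
  "natsq = {z. fst z \<ge> 0 \<and> snd z \<ge> 0}"

definition nat_int :: "(int \<times> int) set" where
  "nat_int = {z. fst z \<ge> 0}"

definition int_nat :: "(int \<times> int) set" where
  "int_nat = {z. snd z \<ge> 0}"

(* increment law of the walk Z on \<nat>\<^sup>2 at state (i,j) *)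
definition lawZ :: "nat \<Rightarrow> (int \<times> int) pmf \<Rightarrow> (nat \<Rightarrow> (int \<times> int) pmf) \<Rightarrow>
    (nat \<Rightarrow> (int \<times> int) pmf) \<Rightarrow> (nat \<Rightarrow> nat \<Rightarrow> (int \<times> int) pmf) \<Rightarrow> int \<times> int \<Rightarrow> (int \<times> int) pmf" where
  "lawZ k0 \<mu> \<mu>' \<mu>'' \<mu>2 z =
     (if fst z \<ge> int k0 \<and> snd z \<ge> int k0 then \<mu>
      else if fst z \<ge> int k0 then \<mu>' (nat (snd z))
      else if snd z \<ge> int k0 then \<mu>'' (nat (fst z))
      else \<mu>2 (nat (fst z)) (nat (snd z)))"

definition law1 :: "nat \<Rightarrow> (int \<times> int) pmf \<Rightarrow> (nat \<Rightarrow> (int \<times> int) pmf) \<Rightarrow> int \<times> int \<Rightarrow> (int \<times> int) pmf" where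
  "law1 k0 \<mu> \<mu>'' z = (if fst z \<ge> int k0 then \<mu> else \<mu>'' (nat (fst z)))"

definition law2 :: "nat \<Rightarrow> (int \<times> int) pmf \<Rightarrow> (nat \<Rightarrow> (int \<times> int) pmf) \<Rightarrow> int \<times> int \<Rightarrow> (int \<times> int) pmf" where
  "law2 k0 \<mu> \<mu>' z = (if snd z \<ge> int k0 then \<mu> else \<mu>' (nat (snd z)))"

definition trans_prob :: "(int \<times> int \<Rightarrow> (int \<times> int) pmf) \<Rightarrow> int \<times> int \<Rightarrow> int \<times> int \<Rightarrow> real" where
  "trans_prob L z z' = pmf (L z) (fst z' - fst z, snd z' - snd z)"

definition irreducible_on :: "'s set \<Rightarrow> ('s \<Rightarrow> 's \<Rightarrow> real) \<Rightarrow> bool" where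
  "irreducible_on S p \<longleftrightarrow>
     (\<forall>x\<in>S. \<forall>y\<in>S. (x, y) \<in> {(u, v). u \<in> S \<and> v \<in> S \<and> p u v > 0}\<^sup>*)"

definition markov_chain_from :: "'a measure \<Rightarrow> (nat \<Rightarrow> 'a \<Rightarrow> 's) \<Rightarrow> ('s \<Rightarrow> 's \<Rightarrow> real) \<Rightarrow> 's \<Rightarrow> bool" where
  "markov_chain_from M Z p z0 \<longleftrightarrow>
     prob_space M \<and>
     (\<forall>n. Z n \<in> measurable M (count_space UNIV)) \<and>
     measure M {\<omega>\<in>space M. Z 0 \<omega> = z0} = 1 \<and>
     (\<forall>n (zs :: nat \<Rightarrow> 's).
        measure M {\<omega>\<in>space M. \<forall>i\<le>Suc n. Z i \<omega> = zs i}
        = measure M {\<omega>\<in>space M. \<forall>i\<le>n. Z i \<omega> = zs i} * p (zs n) (zs (Suc n)))"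

end

theory Submission
  imports Defs
begin

text \<open>
  The return time to column \<open>k\<close> depends only on the horizontal coordinate, which is a Markov chain
  on its own; killing it on entering \<open>k\<close> gives the operator \<open>R = killed_step\<close>, and
  \<open>\<Sum>\<^sub>j R\<^sup>j 1 (k)\<close> is the expected return time.
  Before the return, \<open>|Y|\<close> is at most the sum of the vertical increments so far, and by (A1) and the
  exponential moment (A2) each increment has conditional mean at most \<open>c = k0 + exp(\<delta> k0) C / \<gamma>\<close>.
  Hence the expected supremum is at most \<open>c\<close> times the expected return time, which is finite by a
  Foster-Lyapunov argument: \<open>x / |m1|\<close> drops by 1 per step in mean on \<open>x \<ge> k0\<close>, and from the
  finitely many columns below \<open>k0\<close> irreducibility lets the walk reach \<open>k\<close> within a bounded number
  of steps with probability bounded away from 0.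
\<close>

section \<open>Markov chains\<close>

lemma nn_integral_comp_countable:
  fixes V :: "'a \<Rightarrow> 'b::countable" and F :: "'b \<Rightarrow> ennreal"
  assumes V: "V \<in> measurable M (count_space UNIV)"
  shows "(\<integral>\<^sup>+\<omega>. F (V \<omega>) \<partial>M) = (\<integral>\<^sup>+v. F v * emeasure M {\<omega>\<in>space M. V \<omega> = v} \<partial>count_space UNIV)"
proof -
  have level_sets: "{\<omega>\<in>space M. V \<omega> = v} \<in> sets M" for v
    using V by measurable
  have "(\<integral>\<^sup>+\<omega>. F (V \<omega>) \<partial>M)
      = (\<integral>\<^sup>+\<omega>. (\<integral>\<^sup>+v. F v * indicator {\<omega>\<in>space M. V \<omega> = v} \<omega> \<partial>count_space UNIV) \<partial>M)"
  proof (rule nn_integral_cong)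
    fix \<omega> assume "\<omega> \<in> space M"
    then show "F (V \<omega>) = (\<integral>\<^sup>+v. F v * indicator {\<omega>\<in>space M. V \<omega> = v} \<omega> \<partial>count_space UNIV)"
      by (subst nn_integral_count_space'[of "{V \<omega>}"]) (auto split: split_indicator)
  qed
  also have "\<dots> = (\<integral>\<^sup>+v. (\<integral>\<^sup>+\<omega>. F v * indicator {\<omega>\<in>space M. V \<omega> = v} \<omega> \<partial>M) \<partial>count_space UNIV)"
    by (rule nn_integral_count_space_nn_integral) (use level_sets in auto)
  also have "\<dots> = (\<integral>\<^sup>+v. F v * emeasure M {\<omega>\<in>space M. V \<omega> = v} \<partial>count_space UNIV)"
    by (simp add: nn_integral_cmult_indicator level_sets)
  finally show ?thesis .
qed

locale markov_chain =
  fixes M :: "'a measure" and Z :: "nat \<Rightarrow> 'a \<Rightarrow> 's::countable"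
    and p :: "'s \<Rightarrow> 's \<Rightarrow> real" and z0 :: 's
  assumes chain: "markov_chain_from M Z p z0"
begin

sublocale prob_space M
  using chain by (simp add: markov_chain_from_def)

lemma measurable_Z [measurable]: "Z n \<in> measurable M (count_space UNIV)"
  using chain by (simp add: markov_chain_from_def)

lemma AE_Z_0: "AE \<omega> in M. Z 0 \<omega> = z0"
proof -
  have "measure M {\<omega>\<in>space M. Z 0 \<omega> = z0} = 1"
    using chain by (simp add: markov_chain_from_def)
  moreover have "{\<omega>\<in>space M. Z 0 \<omega> = z0} \<in> sets M"
    by measurable
  ultimately show ?thesis
    by (simp add: AE_in_set_eq_1 prob_eq_1)
qed

definition hist :: "nat \<Rightarrow> 'a \<Rightarrow> 's list" where
  "hist n \<omega> = map (\<lambda>i. Z i \<omega>) [0..<Suc n]"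

lemma length_hist [simp]: "length (hist n \<omega>) = Suc n"
  by (simp add: hist_def)

lemma nth_hist: "i \<le> n \<Longrightarrow> hist n \<omega> ! i = Z i \<omega>"
  by (simp add: hist_def nth_append del: upt_Suc)

lemma hist_Suc: "hist (Suc n) \<omega> = hist n \<omega> @ [Z (Suc n) \<omega>]"
  by (simp add: hist_def)

lemma last_hist: "last (hist n \<omega>) = Z n \<omega>"
  by (simp add: hist_def)

lemma hist_eq_iff: "hist n \<omega> = l \<longleftrightarrow> length l = Suc n \<and> (\<forall>i\<le>n. Z i \<omega> = l ! i)"
  by (auto simp: list_eq_iff_nth_eq nth_hist less_Suc_eq_le)

lemma measurable_hist [measurable]: "hist n \<in> measurable M (count_space UNIV)"
proof (induction n)
  case 0
  have "(\<lambda>\<omega>. [Z 0 \<omega>]) \<in> measurable M (count_space UNIV)"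
    by (rule measurable_compose[OF measurable_Z]) simp
  then show ?case by (simp add: hist_def)
next
  case (Suc n)
  have "(\<lambda>\<omega>. (hist n \<omega>, Z (Suc n) \<omega>)) \<in> measurable M (count_space UNIV \<Otimes>\<^sub>M count_space UNIV)"
    using Suc by measurable
  then have "(\<lambda>\<omega>. (hist n \<omega>, Z (Suc n) \<omega>)) \<in> measurable M (count_space UNIV)"
    by (simp add: pair_measure_countable)
  then have "(\<lambda>\<omega>. case (hist n \<omega>, Z (Suc n) \<omega>) of (l, z) \<Rightarrow> l @ [z]) \<in> measurable M (count_space UNIV)"
    by (rule measurable_compose) simp
  then show ?case by (simp add: hist_Suc[abs_def] del: upt_Suc)
qed

lemma emeasure_hist_Suc:
  assumes p_nonneg: "\<And>z z'. 0 \<le> p z z'"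
  shows "emeasure M {\<omega>\<in>space M. (hist n \<omega>, Z (Suc n) \<omega>) = (l, z')}
    = emeasure M {\<omega>\<in>space M. hist n \<omega> = l} * ennreal (p (last l) z')"
proof (cases "length l = Suc n")
  case False
  then show ?thesis by (auto simp: hist_eq_iff)
next
  case True
  define zs where "zs i = (l @ [z']) ! i" for i
  have "l \<noteq> []"
    using True by auto
  then have "zs n = last l" "zs (Suc n) = z'"
    using True by (simp_all add: zs_def nth_append last_conv_nth)
  moreover have "{\<omega>\<in>space M. (hist n \<omega>, Z (Suc n) \<omega>) = (l, z')} = {\<omega>\<in>space M. \<forall>i\<le>Suc n. Z i \<omega> = zs i}"
    using True by (auto simp: hist_eq_iff zs_def nth_append le_Suc_eq)
  moreover have "{\<omega>\<in>space M. hist n \<omega> = l} = {\<omega>\<in>space M. \<forall>i\<le>n. Z i \<omega> = zs i}"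
    using True by (auto simp: hist_eq_iff zs_def nth_append)
  moreover have "measure M {\<omega>\<in>space M. \<forall>i\<le>Suc n. Z i \<omega> = zs i}
        = measure M {\<omega>\<in>space M. \<forall>i\<le>n. Z i \<omega> = zs i} * p (zs n) (zs (Suc n))"
    using chain by (simp add: markov_chain_from_def)
  ultimately show ?thesis
    by (simp add: emeasure_eq_measure ennreal_mult p_nonneg)
qed

lemma nn_integral_markov_step:
  fixes F :: "'s list \<Rightarrow> ennreal" and g :: "'s \<Rightarrow> 's \<Rightarrow> ennreal"
  assumes p_nonneg: "\<And>z z'. 0 \<le> p z z'"
  shows "(\<integral>\<^sup>+\<omega>. F (hist n \<omega>) * g (Z n \<omega>) (Z (Suc n) \<omega>) \<partial>M)
       = (\<integral>\<^sup>+\<omega>. F (hist n \<omega>) * (\<integral>\<^sup>+z'. ennreal (p (Z n \<omega>) z') * g (Z n \<omega>) z' \<partial>count_space UNIV) \<partial>M)"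
proof -
  define G where "G = (\<lambda>(l, z'). F l * g (last l) z')"
  define E where "E l = emeasure M {\<omega>\<in>space M. hist n \<omega> = l}" for l
  define E' where "E' l z' = emeasure M {\<omega>\<in>space M. (hist n \<omega>, Z (Suc n) \<omega>) = (l, z')}" for l z'
  have "(\<lambda>\<omega>. (hist n \<omega>, Z (Suc n) \<omega>)) \<in> measurable M (count_space UNIV \<Otimes>\<^sub>M count_space UNIV)"
    by measurable
  then have measurable_pair: "(\<lambda>\<omega>. (hist n \<omega>, Z (Suc n) \<omega>)) \<in> measurable M (count_space UNIV)"
    by (simp add: pair_measure_countable)
  interpret count: sigma_finite_measure "count_space (UNIV :: 's set)"
    by (rule sigma_finite_measure_count_space)
  have "(\<integral>\<^sup>+\<omega>. F (hist n \<omega>) * g (Z n \<omega>) (Z (Suc n) \<omega>) \<partial>M) = (\<integral>\<^sup>+\<omega>. G (hist n \<omega>, Z (Suc n) \<omega>) \<partial>M)"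
    by (simp add: G_def last_hist)
  also have "\<dots> = (\<integral>\<^sup>+v. G v * emeasure M {\<omega>\<in>space M. (hist n \<omega>, Z (Suc n) \<omega>) = v}
      \<partial>(count_space UNIV \<Otimes>\<^sub>M count_space UNIV))"
    by (simp add: nn_integral_comp_countable[OF measurable_pair] pair_measure_countable)
  also have "\<dots> = (\<integral>\<^sup>+l. \<integral>\<^sup>+z'. G (l, z') * E' l z' \<partial>count_space UNIV \<partial>count_space UNIV)"
    unfolding E'_def by (rule count.nn_integral_fst[symmetric]) (simp add: pair_measure_countable)
  also have "\<dots> = (\<integral>\<^sup>+l. F l * (\<integral>\<^sup>+z'. ennreal (p (last l) z') * g (last l) z' \<partial>count_space UNIV) * E l
      \<partial>count_space UNIV)"
  proof (rule nn_integral_cong)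
    fix l
    have "(\<integral>\<^sup>+z'. G (l, z') * E' l z' \<partial>count_space UNIV)
        = (\<integral>\<^sup>+z'. (F l * E l) * (ennreal (p (last l) z') * g (last l) z') \<partial>count_space UNIV)"
      unfolding E'_def E_def emeasure_hist_Suc[OF p_nonneg] by (simp add: G_def mult_ac)
    also have "\<dots> = F l * (\<integral>\<^sup>+z'. ennreal (p (last l) z') * g (last l) z' \<partial>count_space UNIV) * E l"
      by (simp add: nn_integral_cmult mult_ac)
    finally show "(\<integral>\<^sup>+z'. G (l, z') * E' l z' \<partial>count_space UNIV)
        = F l * (\<integral>\<^sup>+z'. ennreal (p (last l) z') * g (last l) z' \<partial>count_space UNIV) * E l" .
  qed
  also have "\<dots> = (\<integral>\<^sup>+\<omega>. F (hist n \<omega>) * (\<integral>\<^sup>+z'. ennreal (p (last (hist n \<omega>)) z') * g (last (hist n \<omega>)) z'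
      \<partial>count_space UNIV) \<partial>M)"
    unfolding E_def by (rule nn_integral_comp_countable[OF measurable_hist, symmetric])
  finally show ?thesis
    by (simp only: last_hist)
qed

end

section \<open>The horizontal walk killed at a column\<close>

lemma trans_prob_nonneg: "0 \<le> trans_prob L z z'"
  by (simp add: trans_prob_def)

lemma nn_integral_trans_prob:
  "(\<integral>\<^sup>+z'. ennreal (trans_prob L z z') * g z' \<partial>count_space UNIV)
   = (\<integral>\<^sup>+d. g (fst z + fst d, snd z + snd d) \<partial>measure_pmf (L z))"
proof -
  have bij: "bij_betw (\<lambda>z'::int \<times> int. (fst z' - fst z, snd z' - snd z)) UNIV UNIV"
    by (rule bij_betwI[where g = "\<lambda>d. (fst z + fst d, snd z + snd d)"]) auto
  have "(\<integral>\<^sup>+d. g (fst z + fst d, snd z + snd d) \<partial>measure_pmf (L z))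
      = (\<integral>\<^sup>+d. ennreal (pmf (L z) d) * g (fst z + fst d, snd z + snd d) \<partial>count_space UNIV)"
    by (rule nn_integral_measure_pmf)
  also have "\<dots> = (\<integral>\<^sup>+z'. ennreal (trans_prob L z z') * g z' \<partial>count_space UNIV)"
    by (subst nn_integral_bij_count_space[OF bij, symmetric]) (simp add: trans_prob_def)
  finally show ?thesis ..
qed

text \<open>\<open>L x\<close> is the increment law in column \<open>x\<close>. \<open>(killed_step L k ^^ n) (\<lambda>_. 1) x\<close> is the
  probability that the horizontal walk started in \<open>x\<close> avoids \<open>k\<close> at times \<open>1..n\<close>, so
  \<open>\<Sum>j<n. (killed_step L k ^^ j) (\<lambda>_. 1) x\<close> is the expected value of \<open>min n T\<close>, where \<open>T\<close> is the
  hitting time of \<open>k\<close> after time 0.\<close>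

definition killed_step :: "(int \<Rightarrow> (int \<times> int) pmf) \<Rightarrow> int \<Rightarrow> (int \<Rightarrow> ennreal) \<Rightarrow> int \<Rightarrow> ennreal" where
  "killed_step L k f x = (\<integral>\<^sup>+d. (if x + fst d = k then 0 else f (x + fst d)) \<partial>measure_pmf (L x))"

lemma killed_step_mono: "(\<And>y. f y \<le> g y) \<Longrightarrow> killed_step L k f x \<le> killed_step L k g x"
  unfolding killed_step_def by (rule nn_integral_mono) auto

lemma killed_step_mono_nonneg:
  assumes "\<And>d. d \<in> set_pmf (L x) \<Longrightarrow> 0 \<le> x + fst d" and "\<And>y. 0 \<le> y \<Longrightarrow> f y \<le> g y"
  shows "killed_step L k f x \<le> killed_step L k g x"
  unfolding killed_step_def
  by (rule nn_integral_mono_AE) (auto simp: AE_measure_pmf_iff assms)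

lemma killed_step_add: "killed_step L k (\<lambda>y. f y + g y) x = killed_step L k f x + killed_step L k g x"
  unfolding killed_step_def by (subst nn_integral_add[symmetric]) (auto intro!: nn_integral_cong)

lemma killed_step_cmult: "killed_step L k (\<lambda>y. c * f y) x = c * killed_step L k f x"
  unfolding killed_step_def by (subst nn_integral_cmult[symmetric]) (auto intro!: nn_integral_cong)

lemma killed_step_sum:
  "killed_step L k (\<lambda>y. \<Sum>j\<in>J. f j y) x = (\<Sum>j\<in>J. killed_step L k (f j) x)"
  unfolding killed_step_def by (subst nn_integral_sum[symmetric]) (auto intro!: nn_integral_cong)

lemma killed_step_le_1:
  assumes "\<And>y. f y \<le> 1"
  shows "killed_step L k f x \<le> 1"
proof -
  have "killed_step L k f x \<le> (\<integral>\<^sup>+d. 1 \<partial>measure_pmf (L x))"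
    unfolding killed_step_def by (rule nn_integral_mono) (simp add: assms)
  then show ?thesis
    by simp
qed

lemma killed_step_pow_le_1: "(killed_step L k ^^ n) (\<lambda>_. 1) x \<le> 1"
  by (induction n arbitrary: x) (auto intro: killed_step_le_1)

lemma killed_step_pow_mono:
  "(\<And>y. f y \<le> g y) \<Longrightarrow> (killed_step L k ^^ n) f x \<le> (killed_step L k ^^ n) g x"
  by (induction n arbitrary: x) (auto intro: killed_step_mono)

lemma killed_step_pow_antimono:
  assumes "m \<le> n"
  shows "(killed_step L k ^^ n) (\<lambda>_. 1) x \<le> (killed_step L k ^^ m) (\<lambda>_. 1) x"
proof -
  obtain d where "n = m + d"
    using assms le_Suc_ex by blast
  then have "(killed_step L k ^^ n) (\<lambda>_. 1) x
      = (killed_step L k ^^ m) ((killed_step L k ^^ d) (\<lambda>_. 1)) x"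
    by (simp add: funpow_add)
  also have "\<dots> \<le> (killed_step L k ^^ m) (\<lambda>_. 1) x"
    by (intro killed_step_pow_mono killed_step_pow_le_1)
  finally show ?thesis .
qed

lemma killed_step_occupation_Suc:
  "1 + killed_step L k (\<lambda>y. \<Sum>j<n. (killed_step L k ^^ j) (\<lambda>_. 1) y) x
    = (\<Sum>j<Suc n. (killed_step L k ^^ j) (\<lambda>_. 1) x)"
  by (simp add: killed_step_sum sum.lessThan_Suc_shift del: sum.lessThan_Suc)

lemma killed_step_occupation_superharmonic:
  "killed_step L k (\<lambda>y. \<Sum>j<n. (killed_step L k ^^ j) (\<lambda>_. 1) y) x \<le> (\<Sum>j<n. (killed_step L k ^^ j) (\<lambda>_. 1) x)"
proof -
  have "1 + killed_step L k (\<lambda>y. \<Sum>j<n. (killed_step L k ^^ j) (\<lambda>_. 1) y) x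
      = (\<Sum>j<n. (killed_step L k ^^ j) (\<lambda>_. 1) x) + (killed_step L k ^^ n) (\<lambda>_. 1) x"
    by (simp add: killed_step_occupation_Suc add.commute)
  also have "\<dots> \<le> 1 + (\<Sum>j<n. (killed_step L k ^^ j) (\<lambda>_. 1) x)"
    by (simp add: add.commute add_left_mono killed_step_pow_le_1)
  finally show ?thesis
    by (simp add: ennreal_add_left_cancel_le)
qed

lemma killed_step_occupation_le_lyapunov:
  assumes nonneg: "\<And>x d. 0 \<le> x \<Longrightarrow> d \<in> set_pmf (L x) \<Longrightarrow> 0 \<le> x + fst d"
    and drift: "\<And>x. 0 \<le> x \<Longrightarrow> 1 + killed_step L k W x \<le> W x"
    and "0 \<le> x"
  shows "(\<Sum>j<n. (killed_step L k ^^ j) (\<lambda>_. 1) x) \<le> W x"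
  using \<open>0 \<le> x\<close>
proof (induction n arbitrary: x)
  case (Suc n)
  have "(\<Sum>j<Suc n. (killed_step L k ^^ j) (\<lambda>_. 1) x)
      = 1 + killed_step L k (\<lambda>y. \<Sum>j<n. (killed_step L k ^^ j) (\<lambda>_. 1) y) x"
    by (rule killed_step_occupation_Suc[symmetric])
  also have "\<dots> \<le> 1 + killed_step L k W x"
    by (intro add_left_mono killed_step_mono_nonneg nonneg Suc.prems Suc.IH)
  also have "\<dots> \<le> W x"
    by (rule drift[OF Suc.prems])
  finally show ?case .
qed simp

definition fst_step_rel :: "(int \<Rightarrow> (int \<times> int) pmf) \<Rightarrow> int rel" where
  "fst_step_rel L = {(x, y). \<exists>b. 0 < pmf (L x) (y - x, b)}"

lemma nn_integral_measure_pmf_less_1: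
  fixes h :: "'b \<Rightarrow> ennreal"
  assumes le_1: "\<And>d. h d \<le> 1" and "h a < 1" and "0 < pmf P a"
  shows "(\<integral>\<^sup>+d. h d \<partial>measure_pmf P) < 1"
proof -
  obtain t where t: "h a = ennreal t" "0 \<le> t" "t < 1"
    using \<open>h a < 1\<close> by (cases "h a") (auto simp: ennreal_less_one_iff)
  define q where "q = pmf P a"
  have q: "0 < q" "q \<le> 1"
    using \<open>0 < pmf P a\<close> by (auto simp: q_def pmf_le_1)
  have "(\<integral>\<^sup>+d. h d \<partial>measure_pmf P)
      \<le> (\<integral>\<^sup>+d. indicator (UNIV - {a}) d + ennreal t * indicator {a} d \<partial>measure_pmf P)"
    by (rule nn_integral_mono) (use le_1 t in \<open>auto split: split_indicator\<close>)
  also have "\<dots> = ennreal (1 - q) + ennreal t * ennreal q"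
    using measure_pmf.prob_compl[of "{a}" P]
    by (simp add: nn_integral_add nn_integral_cmult measure_pmf.emeasure_eq_measure
        measure_pmf_single q_def)
  also have "\<dots> = ennreal (1 - q + t * q)"
    using q t by (simp add: ennreal_mult)
  also have "\<dots> < 1"
    using q t by (simp add: ennreal_less_one_iff mult_less_cancel_right1 del: ennreal_plus)
  finally show ?thesis .
qed

lemma killed_step_less_1:
  assumes "0 < pmf (L x) (y - x, b)" and "y = k \<or> f y < 1" and "\<And>y. f y \<le> 1"
  shows "killed_step L k f x < 1"
  unfolding killed_step_def
  by (rule nn_integral_measure_pmf_less_1[where a = "(y - x, b)"]) (use assms in auto)

lemma killed_step_pow_less_1_if_reaches:
  assumes "(x, k) \<in> (fst_step_rel L)\<^sup>+"
  shows "\<exists>n. (killed_step L k ^^ n) (\<lambda>_. 1) x < 1"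
  using assms
proof (induction rule: converse_trancl_induct)
  case (base x)
  then obtain b where "0 < pmf (L x) (k - x, b)"
    by (auto simp: fst_step_rel_def)
  then have "(killed_step L k ^^ 1) (\<lambda>_. 1) x < 1"
    by (simp add: killed_step_less_1)
  then show ?case ..
next
  case (step x y)
  then obtain b where "0 < pmf (L x) (y - x, b)"
    by (auto simp: fst_step_rel_def)
  moreover from step obtain n where "(killed_step L k ^^ n) (\<lambda>_. 1) y < 1"
    by auto
  ultimately have "(killed_step L k ^^ Suc n) (\<lambda>_. 1) x < 1"
    by (simp add: killed_step_less_1 killed_step_pow_le_1)
  then show ?case ..
qed

lemma killed_step_pow_uniformly_less_1:
  assumes "finite F" and reach: "\<And>x. x \<in> F \<Longrightarrow> (x, k) \<in> (fst_step_rel L)\<^sup>+"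
  obtains n e where "0 \<le> e" "e < 1" "\<And>x. x \<in> F \<Longrightarrow> (killed_step L k ^^ n) (\<lambda>_. 1) x \<le> ennreal e"
proof -
  obtain m where m: "\<And>x. x \<in> F \<Longrightarrow> (killed_step L k ^^ m x) (\<lambda>_. 1) x < 1"
    using killed_step_pow_less_1_if_reaches[OF reach] by metis
  define n where "n = Max (insert 0 (m ` F))"
  define e where "e = Max (insert 0 ((\<lambda>x. enn2real ((killed_step L k ^^ n) (\<lambda>_. 1) x)) ` F))"
  have less_1: "(killed_step L k ^^ n) (\<lambda>_. 1) x < 1" if "x \<in> F" for x
    using killed_step_pow_antimono[of "m x" n] m[OF that] \<open>finite F\<close> that
    by (auto simp: n_def intro: le_less_trans)
  then have enn2real_less_1: "enn2real ((killed_step L k ^^ n) (\<lambda>_. 1) x) < 1" if "x \<in> F" for x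
    using less_trans[OF less_1[OF that] ennreal_one_less_top] less_1[OF that] by simp
  show ?thesis
  proof
    show "0 \<le> e"
      unfolding e_def by (rule Max_ge) (use \<open>finite F\<close> in auto)
    show "e < 1"
      unfolding e_def using enn2real_less_1 \<open>finite F\<close> by (subst Max_less_iff) auto
    show "(killed_step L k ^^ n) (\<lambda>_. 1) x \<le> ennreal e" if "x \<in> F" for x
    proof (rule enn2real_le)
      show "enn2real ((killed_step L k ^^ n) (\<lambda>_. 1) x) \<le> e"
        unfolding e_def by (rule Max_ge) (use \<open>finite F\<close> that in auto)
    qed (use less_1[OF that] in auto)
  qed
qed

lemma finite_less_top_bounded:
  fixes f :: "'b \<Rightarrow> ennreal"
  assumes "finite F" and "\<And>x. x \<in> F \<Longrightarrow> f x < \<top>"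
  obtains B where "0 \<le> B" and "\<And>x. x \<in> F \<Longrightarrow> f x \<le> ennreal B"
proof
  define B where "B = Max (insert 0 ((\<lambda>x. enn2real (f x)) ` F))"
  show "0 \<le> B"
    unfolding B_def by (rule Max_ge) (use \<open>finite F\<close> in auto)
  show "f x \<le> ennreal B" if "x \<in> F" for x
  proof (rule enn2real_le)
    show "enn2real (f x) \<le> B"
      unfolding B_def by (rule Max_ge) (use \<open>finite F\<close> that in auto)
  qed (use assms(2)[OF that] in auto)
qed

text \<open>On \<open>F\<close> the walk is killed within \<open>n\<close> steps with probability at least \<open>1 - e > 0\<close>, so
  adding a large multiple of the expected number of steps survived among the first \<open>n\<close> repairs the
  drift of \<open>V\<close> on \<open>F\<close>.\<close>

lemma killed_step_lyapunov_exists: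
  assumes "finite F"
    and reach: "\<And>x. x \<in> F \<Longrightarrow> (x, k) \<in> (fst_step_rel L)\<^sup>+"
    and V_finite: "\<And>x. V x < \<top>"
    and RV_finite: "\<And>x. x \<in> F \<Longrightarrow> killed_step L k V x < \<top>"
    and drift: "\<And>x. x \<in> D \<Longrightarrow> x \<notin> F \<Longrightarrow> 1 + killed_step L k V x \<le> V x"
  obtains W where "\<And>x. W x < \<top>" and "\<And>x. x \<in> D \<Longrightarrow> 1 + killed_step L k W x \<le> W x"
proof -
  let ?R = "killed_step L k"
  obtain n e where e: "0 \<le> e" "e < 1" and killed: "\<And>x. x \<in> F \<Longrightarrow> (?R ^^ n) (\<lambda>_. 1) x \<le> ennreal e"
    using killed_step_pow_uniformly_less_1[OF \<open>finite F\<close> reach] by metis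
  obtain B where "0 \<le> B" and RV_le_B: "\<And>x. x \<in> F \<Longrightarrow> ?R V x \<le> ennreal B"
    using finite_less_top_bounded[OF \<open>finite F\<close>, of "?R V"] RV_finite by metis
  define c where "c = (1 + B) / (1 - e)"
  have "0 \<le> c"
    using \<open>0 \<le> B\<close> e by (simp add: c_def)
  have c_eq: "c = (1 + B) + c * e"
    using e by (simp add: c_def field_simps)
  define \<phi> where "\<phi> y = (\<Sum>j<n. (?R ^^ j) (\<lambda>_. 1) y)" for y
  define W where "W y = V y + ennreal c * \<phi> y" for y
  have \<phi>_finite: "\<phi> y < \<top>" for y
  proof -
    have "\<phi> y \<le> (\<Sum>j<n. 1)"
      unfolding \<phi>_def by (intro sum_mono killed_step_pow_le_1)
    then show ?thesis
      by (simp add: order.strict_trans1 of_nat_less_top)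
  qed
  have R_\<phi>: "1 + ?R \<phi> y = \<phi> y + (?R ^^ n) (\<lambda>_. 1) y" for y
    unfolding \<phi>_def by (simp add: killed_step_occupation_Suc)
  have R_W: "?R W y = ?R V y + ennreal c * ?R \<phi> y" for y
    unfolding W_def by (simp add: killed_step_add killed_step_cmult)
  show ?thesis
  proof
    show "W x < \<top>" for x
      using V_finite \<phi>_finite by (simp add: W_def ennreal_mult_less_top)
  next
    fix x assume "x \<in> D"
    show "1 + ?R W x \<le> W x"
    proof (cases "x \<in> F")
      case False
      have "1 + ?R W x = (1 + ?R V x) + ennreal c * ?R \<phi> x"
        by (simp add: R_W add.assoc)
      also have "\<dots> \<le> V x + ennreal c * \<phi> x"
        unfolding \<phi>_def
        by (intro add_mono drift[OF \<open>x \<in> D\<close> False] mult_left_mono killed_step_occupation_superharmonic)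
           simp
      finally show ?thesis
        by (simp add: W_def)
    next
      case True
      have "ennreal c + (1 + ?R W x) = 1 + ?R V x + ennreal c * (1 + ?R \<phi> x)"
        by (simp add: R_W distrib_left add_ac)
      also have "\<dots> = 1 + ?R V x + ennreal c * (\<phi> x + (?R ^^ n) (\<lambda>_. 1) x)"
        by (simp only: R_\<phi>)
      also have "\<dots> \<le> 1 + ennreal B + ennreal c * (\<phi> x + ennreal e)"
        by (intro add_mono order.refl mult_left_mono RV_le_B killed True) simp
      also have "\<dots> = ennreal c * \<phi> x + ennreal (1 + B + c * e)"
        using \<open>0 \<le> B\<close> \<open>0 \<le> c\<close> e by (simp add: distrib_left ennreal_mult add_ac)
      also have "\<dots> \<le> ennreal c + W x"
        using c_eq by (simp add: W_def add_ac)
      finally show ?thesis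
        by (simp add: ennreal_add_left_cancel_le)
    qed
  qed
qed

section \<open>Moment bounds and positive recurrence\<close>

lemma le_exp_moment_weight:
  fixes a b c \<delta> \<gamma> :: real
  assumes "0 < \<delta>" "0 < \<gamma>" "- c \<le> b"
  shows "a \<le> exp (\<gamma> * c) / \<delta> * exp (\<delta> * a + \<gamma> * b)"
proof -
  have "\<delta> * a \<le> exp (\<delta> * a)"
    using exp_ge_add_one_self[of "\<delta> * a"] by linarith
  also have "\<dots> \<le> exp (\<gamma> * (c + b) + \<delta> * a)"
    using assms by simp
  also have "\<dots> = exp (\<gamma> * c) * exp (\<delta> * a + \<gamma> * b)"
    by (simp add: exp_add[symmetric] algebra_simps)
  finally show ?thesis
    using \<open>0 < \<delta>\<close> by (simp add: field_simps)
qed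

lemma nn_integral_abs_snd_le_exp_moment:
  fixes P :: "(int \<times> int) pmf" and c \<delta> \<gamma> C :: real
  assumes "0 < \<delta>" "0 < \<gamma>" "0 \<le> c" "0 \<le> C"
    and bounded_below: "\<And>d. d \<in> set_pmf P \<Longrightarrow> - c \<le> real_of_int (fst d) \<and> - c \<le> real_of_int (snd d)"
    and moment: "(\<integral>\<^sup>+d. ennreal (exp (\<delta> * real_of_int (fst d) + \<gamma> * real_of_int (snd d))) \<partial>measure_pmf P)
      \<le> ennreal C"
  shows "(\<integral>\<^sup>+d. ennreal (real_of_int \<bar>snd d\<bar>) \<partial>measure_pmf P) \<le> ennreal (c + exp (\<delta> * c) / \<gamma> * C)"
proof -
  let ?E = "\<lambda>d. exp (\<delta> * real_of_int (fst d) + \<gamma> * real_of_int (snd d))"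
  have "real_of_int \<bar>snd d\<bar> \<le> c + exp (\<delta> * c) / \<gamma> * ?E d" if "d \<in> set_pmf P" for d
  proof (cases "snd d < 0")
    case True
    then show ?thesis
      using bounded_below[OF that] assms by (simp add: add_increasing2)
  next
    case False
    have "real_of_int (snd d) \<le> exp (\<delta> * c) / \<gamma> * ?E d"
      using le_exp_moment_weight[of \<gamma> \<delta> c "real_of_int (fst d)" "real_of_int (snd d)"]
        bounded_below[OF that] assms by (simp add: add.commute)
    then show ?thesis
      using False \<open>0 \<le> c\<close> by simp
  qed
  then have "(\<integral>\<^sup>+d. ennreal (real_of_int \<bar>snd d\<bar>) \<partial>measure_pmf P)
      \<le> (\<integral>\<^sup>+d. ennreal c + ennreal (exp (\<delta> * c) / \<gamma>) * ennreal (?E d) \<partial>measure_pmf P)"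
    using assms
    by (intro nn_integral_mono_AE)
       (auto simp: AE_measure_pmf_iff ennreal_mult[symmetric] ennreal_plus[symmetric] simp del: ennreal_plus)
  also have "\<dots> = ennreal c + ennreal (exp (\<delta> * c) / \<gamma>) * (\<integral>\<^sup>+d. ennreal (?E d) \<partial>measure_pmf P)"
    by (simp add: nn_integral_add nn_integral_cmult)
  also have "\<dots> \<le> ennreal c + ennreal (exp (\<delta> * c) / \<gamma>) * ennreal C"
    by (intro add_left_mono mult_left_mono moment) simp
  also have "\<dots> = ennreal c + ennreal (exp (\<delta> * c) / \<gamma> * C)"
    by (simp only: ennreal_mult''[OF \<open>0 \<le> C\<close>, symmetric])
  also have "\<dots> = ennreal (c + exp (\<delta> * c) / \<gamma> * C)"
    by (rule ennreal_plus[symmetric]) (use assms in auto)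
  finally show ?thesis .
qed

lemma killed_step_linear_less_top:
  fixes \<alpha> c \<delta> \<gamma> C :: real
  assumes "0 \<le> \<alpha>" "0 < \<delta>" "0 < \<gamma>" "0 \<le> C" "0 \<le> x"
    and bounded_below: "\<And>d. d \<in> set_pmf (L x) \<Longrightarrow> - c \<le> real_of_int (snd d)"
    and moment: "(\<integral>\<^sup>+d. ennreal (exp (\<delta> * real_of_int (fst d) + \<gamma> * real_of_int (snd d))) \<partial>measure_pmf (L x))
      \<le> ennreal C"
  shows "killed_step L k (\<lambda>y. ennreal (\<alpha> * real_of_int y)) x < \<top>"
proof -
  let ?E = "\<lambda>d. exp (\<delta> * real_of_int (fst d) + \<gamma> * real_of_int (snd d))"
  let ?K = "\<alpha> * (exp (\<gamma> * c) / \<delta>)"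
  have "\<alpha> * real_of_int (x + fst d) \<le> \<alpha> * real_of_int x + ?K * ?E d" if "d \<in> set_pmf (L x)" for d
    using mult_left_mono[OF le_exp_moment_weight[OF \<open>0 < \<delta>\<close> \<open>0 < \<gamma>\<close> bounded_below[OF that]] \<open>0 \<le> \<alpha>\<close>]
    by (simp add: distrib_left mult.assoc)
  then have "killed_step L k (\<lambda>y. ennreal (\<alpha> * real_of_int y)) x
      \<le> (\<integral>\<^sup>+d. ennreal (\<alpha> * real_of_int x) + ennreal ?K * ennreal (?E d) \<partial>measure_pmf (L x))"
    unfolding killed_step_def using assms
    by (intro nn_integral_mono_AE)
       (auto simp: AE_measure_pmf_iff ennreal_mult[symmetric] ennreal_plus[symmetric] ennreal_leI
         simp del: ennreal_plus)
  also have "\<dots> = ennreal (\<alpha> * real_of_int x) + ennreal ?K * (\<integral>\<^sup>+d. ennreal (?E d) \<partial>measure_pmf (L x))"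
    by (simp add: nn_integral_add nn_integral_cmult)
  also have "\<dots> \<le> ennreal (\<alpha> * real_of_int x) + ennreal ?K * ennreal C"
    by (intro add_left_mono mult_left_mono moment) simp
  also have "\<dots> < \<top>"
    by (simp add: ennreal_mult_less_top)
  finally show ?thesis .
qed

lemma killed_step_linear_drift:
  fixes \<mu> :: "(int \<times> int) pmf"
  defines "m \<equiv> measure_pmf.expectation \<mu> (\<lambda>d. real_of_int (fst d))"
  assumes "m < 0" and "L x = \<mu>" and nonneg: "\<And>d. d \<in> set_pmf \<mu> \<Longrightarrow> 0 \<le> x + fst d"
  shows "1 + killed_step L k (\<lambda>y. ennreal (real_of_int y / - m)) x \<le> ennreal (real_of_int x / - m)"
proof -
  have integrable: "integrable (measure_pmf \<mu>) (\<lambda>d. real_of_int (fst d))"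
    using \<open>m < 0\<close> not_integrable_integral_eq unfolding m_def by fastforce
  let ?f = "\<lambda>d. real_of_int (x + fst d) / - m"
  have f_nonneg: "AE d in measure_pmf \<mu>. 0 \<le> ?f d"
    unfolding AE_measure_pmf_iff using \<open>m < 0\<close>
    by (intro ballI divide_nonneg_pos of_int_nonneg nonneg) simp_all
  have integral_f: "(\<integral>d. ?f d \<partial>measure_pmf \<mu>) = real_of_int x / - m - 1"
    using integrable \<open>m < 0\<close> by (simp add: m_def field_simps)
  have "killed_step L k (\<lambda>y. ennreal (real_of_int y / - m)) x \<le> (\<integral>\<^sup>+d. ennreal (?f d) \<partial>measure_pmf \<mu>)"
    unfolding killed_step_def \<open>L x = \<mu>\<close> by (rule nn_integral_mono) simp
  also have "\<dots> = ennreal (real_of_int x / - m - 1)"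
    using nn_integral_eq_integral[OF _ f_nonneg] integrable integral_f by simp
  finally have "1 + killed_step L k (\<lambda>y. ennreal (real_of_int y / - m)) x
      \<le> 1 + ennreal (real_of_int x / - m - 1)"
    by (rule add_left_mono)
  also have "\<dots> = ennreal (real_of_int x / - m)"
  proof -
    have "0 \<le> real_of_int x / - m - 1"
      using integral_nonneg_AE[OF f_nonneg] integral_f by linarith
    then show ?thesis
      using ennreal_plus[of 1 "real_of_int x / - m - 1"] by simp
  qed
  finally show ?thesis .
qed

lemma killed_step_occupation_finite:
  fixes \<mu> :: "(int \<times> int) pmf" and c \<delta> \<gamma> C :: real and threshold :: int
  assumes "0 < \<delta>" "0 < \<gamma>" "0 \<le> C"
    and bounded_below: "\<And>x d. d \<in> set_pmf (L x) \<Longrightarrow> - c \<le> real_of_int (snd d)"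
    and nonneg: "\<And>x d. 0 \<le> x \<Longrightarrow> d \<in> set_pmf (L x) \<Longrightarrow> 0 \<le> x + fst d"
    and moment: "\<And>x. (\<integral>\<^sup>+d. ennreal (exp (\<delta> * real_of_int (fst d) + \<gamma> * real_of_int (snd d)))
      \<partial>measure_pmf (L x)) \<le> ennreal C"
    and L_eq: "\<And>x. threshold \<le> x \<Longrightarrow> L x = \<mu>"
    and negative_drift: "measure_pmf.expectation \<mu> (\<lambda>d. real_of_int (fst d)) < 0"
    and reach: "\<And>x. 0 \<le> x \<Longrightarrow> (x, k) \<in> (fst_step_rel L)\<^sup>+"
    and "0 \<le> x"
  shows "(\<Squnion>n. \<Sum>j<n. (killed_step L k ^^ j) (\<lambda>_. 1) x) < \<top>"
proof -
  define m where "m = measure_pmf.expectation \<mu> (\<lambda>d. real_of_int (fst d))"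
  define V where "V = (\<lambda>y. ennreal (real_of_int y / - m))"
  obtain W where W_finite: "\<And>x. W x < \<top>"
    and W_drift: "\<And>x. x \<in> {0..} \<Longrightarrow> 1 + killed_step L k W x \<le> W x"
  proof (rule killed_step_lyapunov_exists[of "{0..<threshold}" k L V])
    show "killed_step L k V y < \<top>" if "y \<in> {0..<threshold}" for y
      using killed_step_linear_less_top[of "1 / - m" \<delta> \<gamma> C y L c] that assms negative_drift
      by (simp add: V_def m_def)
    show "1 + killed_step L k V y \<le> V y" if "y \<in> {0..}" "y \<notin> {0..<threshold}" for y
      using killed_step_linear_drift[of \<mu> L y k] that negative_drift L_eq nonneg
      by (simp add: V_def m_def)
  qed (use reach in \<open>auto simp: V_def\<close>)
  have "(\<Sum>j<n. (killed_step L k ^^ j) (\<lambda>_. 1) x) \<le> W x" for n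
    by (rule killed_step_occupation_le_lyapunov) (use nonneg W_drift \<open>0 \<le> x\<close> in auto)
  then show ?thesis
    using W_finite[of x] by (meson SUP_least le_less_trans)
qed

section \<open>Vertical excursions before the return\<close>

lemma SUP_Collect_eq_SUP_if:
  fixes f :: "'b \<Rightarrow> 'c::complete_lattice"
  shows "(\<Squnion>s\<in>{s. P s}. f s) = (\<Squnion>s. if P s then f s else \<bottom>)"
proof (rule antisym)
  show "(\<Squnion>s\<in>{s. P s}. f s) \<le> (\<Squnion>s. if P s then f s else \<bottom>)"
    by (rule SUP_mono) force
  show "(\<Squnion>s. if P s then f s else \<bottom>) \<le> (\<Squnion>s\<in>{s. P s}. f s)"
    by (rule SUP_least) (simp add: SUP_upper)
qed

locale killed_chain = markov_chain M Z "trans_prob (\<lambda>z. L (fst z))" z0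
  for M :: "'a measure" and Z :: "nat \<Rightarrow> 'a \<Rightarrow> int \<times> int"
    and L :: "int \<Rightarrow> (int \<times> int) pmf" and z0 :: "int \<times> int"
begin

definition survives :: "nat \<Rightarrow> 'a \<Rightarrow> bool" where
  "survives i \<omega> \<longleftrightarrow> (\<forall>j\<in>{1..i}. fst (Z j \<omega>) \<noteq> fst z0)"

definition survival :: "nat \<Rightarrow> (int \<times> int) list \<Rightarrow> ennreal" where
  "survival i l = (if \<forall>j\<in>{1..i}. fst (l ! j) \<noteq> fst z0 then 1 else 0)"

definition surviving_increment :: "nat \<Rightarrow> 'a \<Rightarrow> ennreal" where
  "surviving_increment i \<omega> =
    (if survives i \<omega> then ennreal (real_of_int \<bar>snd (Z (Suc i) \<omega>) - snd (Z i \<omega>)\<bar>) else 0)"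

definition return_time :: "'a \<Rightarrow> enat" where
  "return_time \<omega> = (\<Sqinter>n\<in>{n. 0 < n \<and> fst (Z n \<omega>) = fst z0}. enat n)"

lemma measurable_fst_Z [measurable]: "(\<lambda>\<omega>. fst (Z j \<omega>)) \<in> measurable M (count_space UNIV)"
  by (rule measurable_compose[OF measurable_Z]) simp

lemma measurable_snd_Z [measurable]: "(\<lambda>\<omega>. snd (Z j \<omega>)) \<in> measurable M (count_space UNIV)"
  by (rule measurable_compose[OF measurable_Z]) simp

lemma pred_survives [measurable]: "Measurable.pred M (survives i)"
  unfolding survives_def by measurable

lemma borel_measurable_surviving_increment [measurable]:
  "surviving_increment i \<in> borel_measurable M"
  unfolding surviving_increment_def by measurable

lemma survival_hist: "survival i (hist i \<omega>) = (if survives i \<omega> then 1 else 0)"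
  by (simp add: survival_def survives_def nth_hist)

lemma survives_Suc: "survives (Suc i) \<omega> \<longleftrightarrow> survives i \<omega> \<and> fst (Z (Suc i) \<omega>) \<noteq> fst z0"
  by (auto simp: survives_def atLeastAtMostSuc_conv)

lemma enat_le_return_time_iff:
  "enat s \<le> return_time \<omega> \<longleftrightarrow> (\<forall>j. 0 < j \<and> j < s \<longrightarrow> fst (Z j \<omega>) \<noteq> fst z0)"
  unfolding return_time_def le_INF_iff by (auto simp: not_le)

lemma enat_Suc_le_return_time_iff: "enat (Suc i) \<le> return_time \<omega> \<longleftrightarrow> survives i \<omega>"
  by (auto simp: enat_le_return_time_iff survives_def)

lemma nn_integral_survives_eq_killed_step_pow:
  "(\<integral>\<^sup>+\<omega>. (if survives i \<omega> then f (fst (Z i \<omega>)) else 0) \<partial>M)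
    = (killed_step L (fst z0) ^^ i) f (fst z0)"
proof (induction i arbitrary: f)
  case 0
  have "(\<integral>\<^sup>+\<omega>. (if survives 0 \<omega> then f (fst (Z 0 \<omega>)) else 0) \<partial>M) = (\<integral>\<^sup>+\<omega>. f (fst z0) \<partial>M)"
    by (rule nn_integral_cong_AE) (use AE_Z_0 in \<open>auto simp: survives_def\<close>)
  then show ?case
    by (simp add: emeasure_space_1)
next
  case (Suc i)
  define g where "g z z' = (if fst z' = fst z0 then 0 else f (fst z'))" for z z' :: "int \<times> int"
  have "(\<integral>\<^sup>+\<omega>. (if survives (Suc i) \<omega> then f (fst (Z (Suc i) \<omega>)) else 0) \<partial>M)
      = (\<integral>\<^sup>+\<omega>. survival i (hist i \<omega>) * g (Z i \<omega>) (Z (Suc i) \<omega>) \<partial>M)"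
    by (intro nn_integral_cong) (simp add: survives_Suc survival_hist g_def)
  also have "\<dots> = (\<integral>\<^sup>+\<omega>. survival i (hist i \<omega>)
      * (\<integral>\<^sup>+z'. ennreal (trans_prob (\<lambda>z. L (fst z)) (Z i \<omega>) z') * g (Z i \<omega>) z' \<partial>count_space UNIV) \<partial>M)"
    by (rule nn_integral_markov_step[OF trans_prob_nonneg])
  also have "\<dots> = (\<integral>\<^sup>+\<omega>. (if survives i \<omega> then killed_step L (fst z0) f (fst (Z i \<omega>)) else 0) \<partial>M)"
    by (intro nn_integral_cong)
       (simp add: nn_integral_trans_prob killed_step_def g_def survival_hist cong: if_cong)
  also have "\<dots> = (killed_step L (fst z0) ^^ Suc i) f (fst z0)"
    by (simp add: Suc.IH funpow_Suc_right del: funpow.simps)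
  finally show ?case .
qed

lemma nn_integral_surviving_increment_le:
  assumes "\<And>x. (\<integral>\<^sup>+d. ennreal (real_of_int \<bar>snd d\<bar>) \<partial>measure_pmf (L x)) \<le> ennreal c"
  shows "(\<integral>\<^sup>+\<omega>. surviving_increment i \<omega> \<partial>M) \<le> ennreal c * (killed_step L (fst z0) ^^ i) (\<lambda>_. 1) (fst z0)"
proof -
  define g where "g z z' = ennreal (real_of_int \<bar>snd z' - snd z\<bar>)" for z z' :: "int \<times> int"
  have "(\<integral>\<^sup>+\<omega>. surviving_increment i \<omega> \<partial>M)
      = (\<integral>\<^sup>+\<omega>. survival i (hist i \<omega>) * g (Z i \<omega>) (Z (Suc i) \<omega>) \<partial>M)"
    by (intro nn_integral_cong) (simp add: surviving_increment_def survival_hist g_def)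
  also have "\<dots> = (\<integral>\<^sup>+\<omega>. survival i (hist i \<omega>)
      * (\<integral>\<^sup>+d. ennreal (real_of_int \<bar>snd d\<bar>) \<partial>measure_pmf (L (fst (Z i \<omega>)))) \<partial>M)"
    by (subst nn_integral_markov_step[OF trans_prob_nonneg]) (simp add: nn_integral_trans_prob g_def)
  also have "\<dots> \<le> (\<integral>\<^sup>+\<omega>. (if survives i \<omega> then 1 else 0) * ennreal c \<partial>M)"
    by (intro nn_integral_mono mult_mono assms) (simp_all add: survival_hist)
  also have "\<dots> = ennreal c * (killed_step L (fst z0) ^^ i) (\<lambda>_. 1) (fst z0)"
    using nn_integral_survives_eq_killed_step_pow[of i "\<lambda>_. 1"]
    by (simp add: nn_integral_cmult mult.commute)
  finally show ?thesis .
qed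

lemma borel_measurable_sup_abs_snd_before_return [measurable]:
  "(\<lambda>\<omega>. \<Squnion>s\<in>{s. enat s \<le> return_time \<omega>}. ennreal (real_of_int \<bar>snd (Z s \<omega>)\<bar>)) \<in> borel_measurable M"
  unfolding SUP_Collect_eq_SUP_if enat_le_return_time_iff by measurable

lemma sup_abs_snd_before_return_le:
  assumes "Z 0 \<omega> = z0" and "snd z0 = 0"
  shows "(\<Squnion>s\<in>{s. enat s \<le> return_time \<omega>}. ennreal (real_of_int \<bar>snd (Z s \<omega>)\<bar>))
    \<le> (\<Squnion>n. \<Sum>i<n. surviving_increment i \<omega>)"
proof (rule SUP_least)
  fix s assume "s \<in> {s. enat s \<le> return_time \<omega>}"
  then have survives: "survives i \<omega>" if "i < s" for i
    using that order_trans[of "enat (Suc i)" "enat s" "return_time \<omega>"]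
    by (simp add: enat_Suc_le_return_time_iff[symmetric])
  have "snd (Z s \<omega>) = (\<Sum>i<s. snd (Z (Suc i) \<omega>) - snd (Z i \<omega>))"
    using assms sum_lessThan_telescope[of "\<lambda>i. snd (Z i \<omega>)" s] by simp
  then have "real_of_int \<bar>snd (Z s \<omega>)\<bar> \<le> (\<Sum>i<s. real_of_int \<bar>snd (Z (Suc i) \<omega>) - snd (Z i \<omega>)\<bar>)"
    by (metis of_int_le_iff of_int_sum sum_abs)
  then have "ennreal (real_of_int \<bar>snd (Z s \<omega>)\<bar>)
      \<le> ennreal (\<Sum>i<s. real_of_int \<bar>snd (Z (Suc i) \<omega>) - snd (Z i \<omega>)\<bar>)"
    by (rule ennreal_leI)
  also have "\<dots> = (\<Sum>i<s. ennreal (real_of_int \<bar>snd (Z (Suc i) \<omega>) - snd (Z i \<omega>)\<bar>))"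
    by (rule sum_ennreal[symmetric]) simp
  also have "\<dots> = (\<Sum>i<s. surviving_increment i \<omega>)"
    by (rule sum.cong) (simp_all add: surviving_increment_def survives)
  also have "\<dots> \<le> (\<Squnion>n. \<Sum>i<n. surviving_increment i \<omega>)"
    by (rule SUP_upper) simp
  finally show "ennreal (real_of_int \<bar>snd (Z s \<omega>)\<bar>) \<le> \<dots>" .
qed

lemma nn_integral_sup_abs_snd_before_return_le:
  assumes "snd z0 = 0"
    and increment: "\<And>x. (\<integral>\<^sup>+d. ennreal (real_of_int \<bar>snd d\<bar>) \<partial>measure_pmf (L x)) \<le> ennreal c"
  shows "(\<integral>\<^sup>+\<omega>. (\<Squnion>s\<in>{s. enat s \<le> return_time \<omega>}. ennreal (real_of_int \<bar>snd (Z s \<omega>)\<bar>)) \<partial>M)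
    \<le> ennreal c * (\<Squnion>n. \<Sum>j<n. (killed_step L (fst z0) ^^ j) (\<lambda>_. 1) (fst z0))"
proof -
  have "AE \<omega> in M. (\<Squnion>s\<in>{s. enat s \<le> return_time \<omega>}. ennreal (real_of_int \<bar>snd (Z s \<omega>)\<bar>))
      \<le> (\<Squnion>n. \<Sum>i<n. surviving_increment i \<omega>)"
    using AE_Z_0 by eventually_elim (rule sup_abs_snd_before_return_le[OF _ \<open>snd z0 = 0\<close>])
  then have "(\<integral>\<^sup>+\<omega>. (\<Squnion>s\<in>{s. enat s \<le> return_time \<omega>}. ennreal (real_of_int \<bar>snd (Z s \<omega>)\<bar>)) \<partial>M)
      \<le> (\<integral>\<^sup>+\<omega>. (\<Squnion>n. \<Sum>i<n. surviving_increment i \<omega>) \<partial>M)"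
    by (rule nn_integral_mono_AE)
  also have "\<dots> = (\<Squnion>n. \<integral>\<^sup>+\<omega>. (\<Sum>i<n. surviving_increment i \<omega>) \<partial>M)"
    by (rule nn_integral_monotone_convergence_SUP) (auto simp: incseq_def le_fun_def intro!: sum_mono2)
  also have "\<dots> \<le> ennreal c * (\<Squnion>n. \<Sum>j<n. (killed_step L (fst z0) ^^ j) (\<lambda>_. 1) (fst z0))"
  proof (rule SUP_least)
    fix n
    have "(\<integral>\<^sup>+\<omega>. (\<Sum>i<n. surviving_increment i \<omega>) \<partial>M) = (\<Sum>i<n. \<integral>\<^sup>+\<omega>. surviving_increment i \<omega> \<partial>M)"
      by (rule nn_integral_sum) simp
    also have "\<dots> \<le> (\<Sum>i<n. ennreal c * (killed_step L (fst z0) ^^ i) (\<lambda>_. 1) (fst z0))"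
      by (intro sum_mono nn_integral_surviving_increment_le increment)
    also have "\<dots> \<le> ennreal c * (\<Squnion>n. \<Sum>j<n. (killed_step L (fst z0) ^^ j) (\<lambda>_. 1) (fst z0))"
      by (auto simp: sum_distrib_left[symmetric] intro!: mult_left_mono SUP_upper)
    finally show "(\<integral>\<^sup>+\<omega>. (\<Sum>i<n. surviving_increment i \<omega>) \<partial>M) \<le> \<dots>" .
  qed
  finally show ?thesis .
qed

end

section \<open>The half-plane chain\<close>

lemma law1_eq_lawZ:
  assumes "1 \<le> k0"
  shows "law1 k0 \<mu> \<mu>'' z = lawZ k0 \<mu> \<mu>' \<mu>'' \<mu>2 (max 0 (min (fst z) (int k0)), int k0)"
  using assms by (auto simp: law1_def lawZ_def max_def)

lemma set_pmf_law1_bounded_below: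
  assumes "1 \<le> k0"
    and A1_mu: "\<And>a b. a < - int k0 \<or> b < - int k0 \<Longrightarrow> pmf \<mu> (a, b) = 0"
    and A1_mu'': "\<And>i a b. i < k0 \<Longrightarrow> b < - int k0 \<or> a < - int i \<Longrightarrow> pmf (\<mu>'' i) (a, b) = 0"
    and "d \<in> set_pmf (law1 k0 \<mu> \<mu>'' z)"
  shows "- real k0 \<le> real_of_int (fst d)" "- real k0 \<le> real_of_int (snd d)"
    and "0 \<le> fst z \<Longrightarrow> 0 \<le> fst z + fst d"
proof -
  have "- int k0 \<le> fst d \<and> - int k0 \<le> snd d \<and> (0 \<le> fst z \<longrightarrow> 0 \<le> fst z + fst d)"
  proof (cases "int k0 \<le> fst z")
    case True
    then have "pmf \<mu> (fst d, snd d) \<noteq> 0"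
      using assms(4) by (simp add: law1_def set_pmf_iff)
    then have "\<not> (fst d < - int k0 \<or> snd d < - int k0)"
      using A1_mu by blast
    then show ?thesis
      using True by auto
  next
    case False
    then have "nat (fst z) < k0"
      using \<open>1 \<le> k0\<close> by linarith
    moreover have "pmf (\<mu>'' (nat (fst z))) (fst d, snd d) \<noteq> 0"
      using False assms(4) by (simp add: law1_def set_pmf_iff)
    ultimately have "\<not> (snd d < - int k0 \<or> fst d < - int (nat (fst z)))"
      using A1_mu'' by blast
    then show ?thesis
      using \<open>nat (fst z) < k0\<close> by (auto split: if_splits)
  qed
  then show "- real k0 \<le> real_of_int (fst d)" "- real k0 \<le> real_of_int (snd d)"
    and "0 \<le> fst z \<Longrightarrow> 0 \<le> fst z + fst d"
    using of_int_le_iff[where 'a = real, of "- int k0"] by simp_all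
qed

lemma fst_step_rel_trancl_if_irreducible:
  assumes irreducible: "irreducible_on nat_int (trans_prob (\<lambda>z. L (fst z)))"
    and "0 \<le> x" "0 \<le> y"
  shows "(x, y) \<in> (fst_step_rel L)\<^sup>+"
proof -
  let ?step = "{(u, v). u \<in> nat_int \<and> v \<in> nat_int \<and> 0 < trans_prob (\<lambda>z. L (fst z)) u v}"
  have project: "(fst u, fst v) \<in> (fst_step_rel L)\<^sup>*" if "(u, v) \<in> ?step\<^sup>*" for u v
    using that
  proof (induction rule: rtrancl_induct)
    case (step v w)
    then have "(fst v, fst w) \<in> fst_step_rel L"
      by (auto simp: fst_step_rel_def trans_prob_def)
    with step.IH show ?case
      by (rule rtrancl_into_rtrancl)
  qed simp
  have rtrancl: "(x', y') \<in> (fst_step_rel L)\<^sup>*" if "0 \<le> x'" "0 \<le> y'" for x' y'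
    using project[of "(x', 0)" "(y', 0)"] irreducible that
    by (simp add: irreducible_on_def nat_int_def)
  show ?thesis
  proof (cases "x = y")
    case True
    have "(x, x + 1) \<in> (fst_step_rel L)\<^sup>+" "(x + 1, x) \<in> (fst_step_rel L)\<^sup>+"
      using rtrancl[of x "x + 1"] rtrancl[of "x + 1" x] \<open>0 \<le> x\<close> by (auto dest: rtranclD)
    then show ?thesis
      using True by (meson trancl_trans)
  next
    case False
    then show ?thesis
      using rtrancl[OF assms(2,3)] by (auto dest: rtranclD)
  qed
qed

theorem lemmaA2:
  fixes k0 :: nat
    and \<mu> :: "(int \<times> int) pmf"
    and \<mu>' \<mu>'' :: "nat \<Rightarrow> (int \<times> int) pmf"
    and \<mu>2 :: "nat \<Rightarrow> nat \<Rightarrow> (int \<times> int) pmf"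
    and \<delta> \<gamma> C :: real
    and k :: nat
    and M :: "'a measure"
    and Z :: "nat \<Rightarrow> 'a \<Rightarrow> int \<times> int"
  assumes k0: "k0 \<ge> 1"
    \<comment> \<open>(A1)\<close>
    and A1_mu: "\<And>a b. a < - int k0 \<or> b < - int k0 \<Longrightarrow> pmf \<mu> (a, b) = 0"
    and A1_mu': "\<And>j a b. j < k0 \<Longrightarrow> a < - int k0 \<or> b < - int j \<Longrightarrow> pmf (\<mu>' j) (a, b) = 0"
    and A1_mu'': "\<And>i a b. i < k0 \<Longrightarrow> b < - int k0 \<or> a < - int i \<Longrightarrow> pmf (\<mu>'' i) (a, b) = 0"
    and A1_mu2: "\<And>i j a b. i < k0 \<Longrightarrow> j < k0 \<Longrightarrow> a < - int i \<or> b < - int j \<Longrightarrow> pmf (\<mu>2 i j) (a, b) = 0"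
    \<comment> \<open>(A2)\<close>
    and A2_pos: "\<delta> > 0" "\<gamma> > 0" "C > 0"
    and A2: "\<And>z. z \<in> natsq \<Longrightarrow>
       (\<integral>\<^sup>+ d. ennreal (exp (\<delta> * real_of_int (fst d) + \<gamma> * real_of_int (snd d)))
          \<partial>measure_pmf (lawZ k0 \<mu> \<mu>' \<mu>'' \<mu>2 z)) \<le> ennreal C"
    \<comment> \<open>(A3)\<close>
    and A3_Z0: "irreducible_on UNIV (trans_prob (\<lambda>_. \<mu>))"
    and A3_Z1: "irreducible_on nat_int (trans_prob (law1 k0 \<mu> \<mu>''))"
    and A3_Z2: "irreducible_on int_nat (trans_prob (law2 k0 \<mu> \<mu>'))"
    and A3_Z: "irreducible_on natsq (trans_prob (lawZ k0 \<mu> \<mu>' \<mu>'' \<mu>2))"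
    \<comment> \<open>negative horizontal drift\<close>
    and m1: "measure_pmf.expectation \<mu> (\<lambda>d. real_of_int (fst d)) < 0"
    \<comment> \<open>Z = (X_1, Y_1) is the chain Z_1 started at (k,0), i.e. has law P_(k,0)\<close>
    and chain: "markov_chain_from M Z (trans_prob (law1 k0 \<mu> \<mu>'')) (int k, 0)"
  defines "T \<equiv> \<lambda>\<omega>. (\<Sqinter>n\<in>{n. 0 < n \<and> fst (Z n \<omega>) = int k}. enat n)"
  shows "(\<lambda>\<omega>. \<Squnion>s\<in>{s. enat s \<le> T \<omega>}. ennreal (real_of_int \<bar>snd (Z s \<omega>)\<bar>)) \<in> borel_measurable M
    \<and> (\<integral>\<^sup>+ \<omega>. (\<Squnion>s\<in>{s. enat s \<le> T \<omega>}. ennreal (real_of_int \<bar>snd (Z s \<omega>)\<bar>)) \<partial>M) < \<infinity>"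
proof -
  define L where "L x = law1 k0 \<mu> \<mu>'' (x, 0)" for x
  have law1_L: "law1 k0 \<mu> \<mu>'' = (\<lambda>z. L (fst z))"
    by (simp add: L_def law1_def fun_eq_iff)
  interpret killed_chain M Z L "(int k, 0)"
    using chain by unfold_locales (simp add: law1_L)
  have bounded_below: "- real k0 \<le> real_of_int (fst d) \<and> - real k0 \<le> real_of_int (snd d)"
    and nonneg: "0 \<le> x \<Longrightarrow> 0 \<le> x + fst d" if "d \<in> set_pmf (L x)" for x d
    using set_pmf_law1_bounded_below[OF k0 A1_mu A1_mu'', where z = "(x, 0)"] that
    by (simp_all add: L_def)
  have moment: "(\<integral>\<^sup>+ d. ennreal (exp (\<delta> * real_of_int (fst d) + \<gamma> * real_of_int (snd d)))
      \<partial>measure_pmf (L x)) \<le> ennreal C" for x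
    unfolding L_def law1_eq_lawZ[OF k0, of \<mu> \<mu>'' "(x, 0)" \<mu>' \<mu>2] by (rule A2) (simp add: natsq_def)
  have occupation: "(\<Squnion>n. \<Sum>j<n. (killed_step L (int k) ^^ j) (\<lambda>_. 1) (int k)) < \<top>"
  proof (rule killed_step_occupation_finite[where \<mu> = \<mu> and threshold = "int k0" and c = "real k0"
      and \<delta> = \<delta> and \<gamma> = \<gamma> and C = C])
    show "(x, int k) \<in> (fst_step_rel L)\<^sup>+" if "0 \<le> x" for x
      using fst_step_rel_trancl_if_irreducible[of L x "int k"] A3_Z1 that by (simp add: law1_L)
  qed (use A2_pos bounded_below nonneg moment m1 in \<open>auto simp: L_def law1_def\<close>)
  have increment: "(\<integral>\<^sup>+ d. ennreal (real_of_int \<bar>snd d\<bar>) \<partial>measure_pmf (L x))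
      \<le> ennreal (real k0 + exp (\<delta> * real k0) / \<gamma> * C)" for x
    by (rule nn_integral_abs_snd_le_exp_moment[OF A2_pos(1,2) _ _ _ moment])
       (use A2_pos bounded_below in auto)
  have "T = return_time"
    by (simp add: T_def return_time_def fun_eq_iff)
  then show ?thesis
    using borel_measurable_sup_abs_snd_before_return occupation
      nn_integral_sup_abs_snd_before_return_le[OF _ increment]
    by (simp add: ennreal_mult_less_top le_less_trans)
qed

end
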